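(* Let $\mathcal C$ be a category of $\mathcal A$-coloured noncrossing partitions, let $p\in\mathcal C(w,\emptyset)$ be a partition lying on one line and let $q$ be a full subpartition of $p$, regarded as a partition in $NC^{\mathcal A}(w_a w_{a+1}\cdots w_{a+b},\emptyset)$. Then $q^*q\in\mathcal C(w_a\cdots w_{a+b}, w_a\cdots w_{a+b})$.
   Context: Colour sets and partitions: a colour set is a set $\mathcal A$ with an involution $a\mapsto a^{-1}$. For words $w,w'$ on $\mathcal A$, an element of $P^{\mathcal A}(w,w')$ is a partition of $|w|+|w'|$ points drawn as an upper row coloured (left to right) by $w$ and a lower row coloured by $w'$; its subsets are blocks. It is noncrossing if there are no four points $k_1<k_2<k_3<k_4$ (ordering: upper row left to right, then lower row right to left) with $k_1,k_3$ in one block and $k_2,k_4$ in a different block. Category operations: tensor product (horizontal juxtaposition), composition $qp$ (stack $q$ below $p$, erase middle points and closed loops), adjoint $p^*$ (reflection in a horizontal axis, exchanging rows), rotation (moving an extreme point to the same end of the other row and replacing its colour $a$ by $a^{-1}$). A category of noncrossing partitions is a family $\mathcal C(w,w')\subset NC^{\mathcal A}(w,w')$ stable under these operations and containing $\pi(a,a)$ for all $a$. A partition lies on one line if it has no lower points. For $p\in P(w,\emptyset)$ with points $1,\dots,k$, a full subpartition is a union $q$ of blocks of $p$ whose set of points is an interval $\{a,a+1,\dots,a+b\}$ with $1\leqslant a\leqslant a+b\leqslant k$. *)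

theory Defs
  imports Main
begin

text \<open>Points of a partition in P(w,w'): upper points Inl i (i < |w|, left to right),
  lower points Inr j (j < |w'|, left to right). A partition is a set of blocks.\<close>

type_synonym pt = "nat + nat"
type_synonym part = "pt set set"

definition points :: "nat \<Rightarrow> nat \<Rightarrow> pt set" where
  "points n m = Inl ` {..<n} \<union> Inr ` {..<m}"

definition is_partition_of :: "pt set \<Rightarrow> part \<Rightarrow> bool" where
  "is_partition_of S p \<longleftrightarrow> (\<forall>B\<in>p. B \<noteq> {}) \<and>
     (\<forall>B\<in>p. \<forall>B'\<in>p. B \<noteq> B' \<longrightarrow> B \<inter> B' = {}) \<and> \<Union>p = S"

definition Part :: "'a list \<Rightarrow> 'a list \<Rightarrow> part set" where
  "Part w w' = {p. is_partition_of (points (length w) (length w')) p}"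

text \<open>Cyclic order: upper row left to right, then lower row right to left.\<close>
definition pos :: "nat \<Rightarrow> nat \<Rightarrow> pt \<Rightarrow> nat" where
  "pos n m x = (case x of Inl i \<Rightarrow> i | Inr j \<Rightarrow> n + (m - 1 - j))"

definition noncrossing :: "nat \<Rightarrow> nat \<Rightarrow> part \<Rightarrow> bool" where
  "noncrossing n m p \<longleftrightarrow> \<not> (\<exists>B\<in>p. \<exists>B'\<in>p. B \<noteq> B' \<and>
     (\<exists>k1\<in>B. \<exists>k2\<in>B'. \<exists>k3\<in>B. \<exists>k4\<in>B'.
        pos n m k1 < pos n m k2 \<and> pos n m k2 < pos n m k3 \<and> pos n m k3 < pos n m k4))"

definition NC :: "'a list \<Rightarrow> 'a list \<Rightarrow> part set" where
  "NC w w' = {p \<in> Part w w'. noncrossing (length w) (length w') p}"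

definition map_part :: "(pt \<Rightarrow> pt) \<Rightarrow> part \<Rightarrow> part" where
  "map_part f p = (\<lambda>B. f ` B) ` p"

definition tensor :: "nat \<Rightarrow> nat \<Rightarrow> part \<Rightarrow> part \<Rightarrow> part" where
  "tensor n1 m1 p q = p \<union> map_part (map_sum (\<lambda>i. i + n1) (\<lambda>j. j + m1)) q"

definition adj :: "part \<Rightarrow> part" where
  "adj p = map_part (case_sum Inr Inl) p"

text \<open>Composition q p (q stacked below p): three rows of points.\<close>
datatype pt3 = Up nat | Mid nat | Lo nat

definition comp_rel :: "part \<Rightarrow> part \<Rightarrow> (pt3 \<times> pt3) set" where
  "comp_rel q p =
     {(case_sum Up Mid x, case_sum Up Mid y) | x y. \<exists>B\<in>p. x \<in> B \<and> y \<in> B} \<union>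
     {(case_sum Mid Lo x, case_sum Mid Lo y) | x y. \<exists>B\<in>q. x \<in> B \<and> y \<in> B}"

text \<open>For p in P(w,w') and q in P(w',w''), comp n k q p with n = |w|, k = |w''|
  is qp in P(w,w''): connected components restricted to the outer rows
  (middle points and closed loops erased).\<close>
definition comp :: "nat \<Rightarrow> nat \<Rightarrow> part \<Rightarrow> part \<Rightarrow> part" where
  "comp n k q p = {B. \<exists>x\<in>points n k.
      B = {y\<in>points n k. (case_sum Up Lo x, case_sum Up Lo y) \<in> (comp_rel q p)\<^sup>*}}"

definition rot_upper_left :: "pt \<Rightarrow> pt" where
  "rot_upper_left x = (case x of Inl i \<Rightarrow> (if i = 0 then Inr 0 else Inl (i - 1))
                               | Inr j \<Rightarrow> Inr (Suc j))"
definition rot_lower_left :: "pt \<Rightarrow> pt" where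
  "rot_lower_left x = (case x of Inr j \<Rightarrow> (if j = 0 then Inl 0 else Inr (j - 1))
                               | Inl i \<Rightarrow> Inl (Suc i))"
definition rot_upper_right :: "nat \<Rightarrow> nat \<Rightarrow> pt \<Rightarrow> pt" where
  "rot_upper_right n m x = (case x of Inl i \<Rightarrow> (if i = n then Inr m else Inl i)
                                    | Inr j \<Rightarrow> Inr j)"
definition rot_lower_right :: "nat \<Rightarrow> nat \<Rightarrow> pt \<Rightarrow> pt" where
  "rot_lower_right n m x = (case x of Inr j \<Rightarrow> (if j = m then Inl n else Inr j)
                                    | Inl i \<Rightarrow> Inl i)"

definition pi_id :: part where
  "pi_id = {{Inl 0, Inr 0}}"

definition is_category :: "('a \<Rightarrow> 'a) \<Rightarrow> ('a list \<Rightarrow> 'a list \<Rightarrow> part set) \<Rightarrow> bool" where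
  "is_category iv C \<longleftrightarrow>
    (\<forall>w w'. C w w' \<subseteq> NC w w') \<and>
    (\<forall>w1 w1' w2 w2' p q. p \<in> C w1 w1' \<longrightarrow> q \<in> C w2 w2' \<longrightarrow>
        tensor (length w1) (length w1') p q \<in> C (w1 @ w2) (w1' @ w2')) \<and>
    (\<forall>w w' w'' p q. p \<in> C w w' \<longrightarrow> q \<in> C w' w'' \<longrightarrow>
        comp (length w) (length w'') q p \<in> C w w'') \<and>
    (\<forall>w w' p. p \<in> C w w' \<longrightarrow> adj p \<in> C w' w) \<and>
    (\<forall>a w w' p. p \<in> C (a # w) w' \<longrightarrow> map_part rot_upper_left p \<in> C w (iv a # w')) \<and>
    (\<forall>a w w' p. p \<in> C w (a # w') \<longrightarrow> map_part rot_lower_left p \<in> C (iv a # w) w') \<and>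
    (\<forall>a w w' p. p \<in> C (w @ [a]) w' \<longrightarrow>
        map_part (rot_upper_right (length w) (length w')) p \<in> C w (w' @ [iv a])) \<and>
    (\<forall>a w w' p. p \<in> C w (w' @ [a]) \<longrightarrow>
        map_part (rot_lower_right (length w) (length w')) p \<in> C (w @ [iv a]) w') \<and>
    (\<forall>a. pi_id \<in> C [a] [a])"

definition on_one_line :: "part \<Rightarrow> bool" where
  "on_one_line p \<longleftrightarrow> (\<forall>B\<in>p. B \<subseteq> range Inl)"

text \<open>Full subpartition (0-based points 0..k-1): union of blocks of p whose points
  form the interval {a..a+b}.\<close>
definition full_subpartition :: "nat \<Rightarrow> part \<Rightarrow> part \<Rightarrow> nat \<Rightarrow> nat \<Rightarrow> bool" where
  "full_subpartition k p q a b \<longleftrightarrow> q \<subseteq> p \<and> \<Union>q = Inl ` {a..a+b} \<and> a + b < k"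

text \<open>q regarded as a partition of the points of w_a ... w_{a+b}.\<close>
definition shift_sub :: "nat \<Rightarrow> part \<Rightarrow> part" where
  "shift_sub a q = map_part (map_sum (\<lambda>i. i - a) id) q"

definition subword :: "'a list \<Rightarrow> nat \<Rightarrow> nat \<Rightarrow> 'a list" where
  "subword w a b = take (Suc b) (drop a w)"

end

theory Submission
  imports Defs
begin

text \<open>Rotating every point of the one-line partition p outside the window a..a+b to the lower
  row gives a partition p' in C whose blocks are exactly those of q (now upper) and the
  remaining ones (now entirely lower). In the composition p'^* p' the lower blocks of p' only
  link middle points, which never reach the outer rows, so p'^* p' = q^* q.\<close>

lemma category_NC: "is_category iv C \<Longrightarrow> C w w' \<subseteq> NC w w'"
  unfolding is_category_def by (elim conjE) simp

lemma category_comp: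
  "is_category iv C \<Longrightarrow> p \<in> C w w' \<Longrightarrow> q \<in> C w' w'' \<Longrightarrow> comp (length w) (length w'') q p \<in> C w w''"
  unfolding is_category_def by (elim conjE) simp

lemma category_adj: "is_category iv C \<Longrightarrow> p \<in> C w w' \<Longrightarrow> adj p \<in> C w' w"
  unfolding is_category_def by (elim conjE) simp

lemma category_rot_upper_left:
  "is_category iv C \<Longrightarrow> p \<in> C (c # w) w' \<Longrightarrow> map_part rot_upper_left p \<in> C w (iv c # w')"
  unfolding is_category_def by (elim conjE) simp

lemma category_rot_upper_right:
  "is_category iv C \<Longrightarrow> p \<in> C (w @ [c]) w' \<Longrightarrow>
     map_part (rot_upper_right (length w) (length w')) p \<in> C w (w' @ [iv c])"
  unfolding is_category_def by (elim conjE) simp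

lemma map_part_comp: "map_part f (map_part g p) = map_part (f \<circ> g) p"
  unfolding map_part_def by (simp add: image_comp)

lemma map_part_Un: "map_part f (p \<union> r) = map_part f p \<union> map_part f r"
  unfolding map_part_def by (rule image_Un)

lemma rotate_prefix_down:
  assumes cat: "is_category iv C" and "p \<in> C (t @ u) w'"
  shows "\<exists>f. map_part f p \<in> C u (rev (map iv t) @ w') \<and>
     (\<forall>i < length u. f (Inl (length t + i)) = Inl i) \<and>
     (\<forall>i < length t. f (Inl i) \<in> range Inr) \<and> (\<forall>j. f (Inr j) \<in> range Inr)"
  using assms(2)
proof (induction t arbitrary: p w')
  case Nil
  then show ?case by (intro exI[of _ id]) (simp add: map_part_def)
next
  case (Cons c t)
  have "map_part rot_upper_left p \<in> C (t @ u) (iv c # w')"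
    using category_rot_upper_left[OF cat] Cons.prems by simp
  from Cons.IH[OF this] obtain f where f:
    "map_part f (map_part rot_upper_left p) \<in> C u (rev (map iv t) @ iv c # w')"
    "\<forall>i < length u. f (Inl (length t + i)) = Inl i"
    "\<forall>i < length t. f (Inl i) \<in> range Inr" "\<forall>j. f (Inr j) \<in> range Inr" by blast
  show ?case
  proof (rule exI[of _ "f \<circ> rot_upper_left"], intro conjI allI impI)
    show "map_part (f \<circ> rot_upper_left) p \<in> C u (rev (map iv (c # t)) @ w')"
      using f(1) by (simp add: map_part_comp)
    show "(f \<circ> rot_upper_left) (Inl (length (c # t) + i)) = Inl i" if "i < length u" for i
      using f(2) that by (simp add: rot_upper_left_def)
    show "(f \<circ> rot_upper_left) (Inl i) \<in> range Inr" if "i < length (c # t)" for i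
      using f(3,4) that by (cases i) (auto simp: rot_upper_left_def)
    show "(f \<circ> rot_upper_left) (Inr j) \<in> range Inr" for j
      using f(4) by (simp add: rot_upper_left_def)
  qed
qed

lemma rotate_suffix_down:
  assumes cat: "is_category iv C" and "p \<in> C (u @ s) w'"
  shows "\<exists>f. map_part f p \<in> C u (w' @ rev (map iv s)) \<and>
     (\<forall>i < length u. f (Inl i) = Inl i) \<and>
     (\<forall>i. length u \<le> i \<and> i < length u + length s \<longrightarrow> f (Inl i) \<in> range Inr) \<and>
     (\<forall>j. f (Inr j) \<in> range Inr)"
  using assms(2)
proof (induction s arbitrary: p w' rule: rev_induct)
  case Nil
  then show ?case by (intro exI[of _ id]) (auto simp: map_part_def)
next
  case (snoc c s)
  let ?r = "rot_upper_right (length (u @ s)) (length w')"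
  have "map_part ?r p \<in> C (u @ s) (w' @ [iv c])"
    using category_rot_upper_right[OF cat] snoc.prems by (metis append_assoc)
  from snoc.IH[OF this] obtain f where f:
    "map_part f (map_part ?r p) \<in> C u ((w' @ [iv c]) @ rev (map iv s))"
    "\<forall>i < length u. f (Inl i) = Inl i"
    "\<forall>i. length u \<le> i \<and> i < length u + length s \<longrightarrow> f (Inl i) \<in> range Inr"
    "\<forall>j. f (Inr j) \<in> range Inr" by blast
  show ?case
  proof (rule exI[of _ "f \<circ> ?r"], intro conjI allI impI)
    show "map_part (f \<circ> ?r) p \<in> C u (w' @ rev (map iv (s @ [c])))"
      using f(1) by (simp add: map_part_comp)
    show "(f \<circ> ?r) (Inl i) = Inl i" if "i < length u" for i
      using f(2) that by (simp add: rot_upper_right_def)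
    show "(f \<circ> ?r) (Inl i) \<in> range Inr" if "length u \<le> i \<and> i < length u + length (s @ [c])" for i
      using f(3,4) that by (cases "i = length (u @ s)") (auto simp: rot_upper_right_def)
    show "(f \<circ> ?r) (Inr j) \<in> range Inr" for j
      using f(4) by (simp add: rot_upper_right_def)
  qed
qed

lemma rotate_outside_down:
  assumes cat: "is_category iv C" and p: "p \<in> C (t @ u @ s) w'"
  obtains F v where "map_part F p \<in> C u v"
    and "\<And>i. i < length u \<Longrightarrow> F (Inl (length t + i)) = Inl i"
    and "\<And>i. i < length (t @ u @ s) \<Longrightarrow> i < length t \<or> length t + length u \<le> i \<Longrightarrow>
           F (Inl i) \<in> range Inr"
proof -
  from rotate_prefix_down[OF cat p] obtain f where f:
    "map_part f p \<in> C (u @ s) (rev (map iv t) @ w')"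
    "\<forall>i < length (u @ s). f (Inl (length t + i)) = Inl i"
    "\<forall>i < length t. f (Inl i) \<in> range Inr" "\<forall>j. f (Inr j) \<in> range Inr" by blast
  from rotate_suffix_down[OF cat f(1)] obtain g where g:
    "map_part g (map_part f p) \<in> C u ((rev (map iv t) @ w') @ rev (map iv s))"
    "\<forall>i < length u. g (Inl i) = Inl i"
    "\<forall>i. length u \<le> i \<and> i < length u + length s \<longrightarrow> g (Inl i) \<in> range Inr"
    "\<forall>j. g (Inr j) \<in> range Inr" by blast
  show thesis
  proof (rule that[of "g \<circ> f"])
    show "map_part (g \<circ> f) p \<in> C u ((rev (map iv t) @ w') @ rev (map iv s))"
      using g(1) by (simp add: map_part_comp)
    show "(g \<circ> f) (Inl (length t + i)) = Inl i" if "i < length u" for i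
      using f(2) g(2) that by simp
    show "(g \<circ> f) (Inl i) \<in> range Inr"
      if "i < length (t @ u @ s)" "i < length t \<or> length t + length u \<le> i" for i
    proof (cases "i < length t")
      case True
      then show ?thesis using f(3) g(4) by auto
    next
      case False
      then have "i - length t < length (u @ s)" using that(1) by simp
      with f(2) have "f (Inl (length t + (i - length t))) = Inl (i - length t)" by blast
      then have "f (Inl i) = Inl (i - length t)" using False by simp
      moreover have "length u \<le> i - length t \<and> i - length t < length u + length s"
        using that False by auto
      ultimately show ?thesis using g(3) by simp
    qed
  qed
qed

lemma rtrancl_Un_stays_outside:
  assumes "(x, y) \<in> (S \<union> M)\<^sup>*" and "x \<notin> Z"
    and "S \<subseteq> (- Z) \<times> (- Z)" and "M \<subseteq> Z \<times> Z"
  shows "(x, y) \<in> S\<^sup>*"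
proof -
  from assms(1) have "(x, y) \<in> S\<^sup>* \<and> y \<notin> Z"
  proof (induction rule: rtrancl_induct)
    case base
    then show ?case using assms(2) by simp
  next
    case (step y z)
    then have "(y, z) \<in> S" using assms(4) by blast
    then show ?case using step assms(3) by (blast intro: rtrancl_into_rtrancl)
  qed
  then show ?thesis ..
qed

lemma comp_rel_Un: "comp_rel (q1 \<union> q2) (p1 \<union> p2) = comp_rel q1 p1 \<union> comp_rel q2 p2"
  unfolding comp_rel_def by auto

lemma adj_Un: "adj (p \<union> r) = adj p \<union> adj r"
  unfolding adj_def by (rule map_part_Un)

lemma comp_rel_subset_square:
  assumes "\<And>B x. B \<in> p \<Longrightarrow> x \<in> B \<Longrightarrow> case_sum Up Mid x \<in> X"
    and "\<And>B x. B \<in> q \<Longrightarrow> x \<in> B \<Longrightarrow> case_sum Mid Lo x \<in> X"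
  shows "comp_rel q p \<subseteq> X \<times> X"
  unfolding comp_rel_def using assms by blast

lemma adj_upper_blocks:
  assumes "\<forall>B\<in>p. B \<subseteq> range Inl" shows "\<forall>B\<in>adj p. B \<subseteq> range Inr"
proof (intro ballI subsetI)
  fix B x assume "B \<in> adj p" "x \<in> B"
  then obtain i where "x = case_sum Inr Inl (Inl i)"
    using assms unfolding adj_def map_part_def by blast
  then show "x \<in> range Inr" by simp
qed

lemma adj_lower_blocks:
  assumes "\<forall>B\<in>p. B \<subseteq> range Inr" shows "\<forall>B\<in>adj p. B \<subseteq> range Inl"
proof (intro ballI subsetI)
  fix B x assume "B \<in> adj p" "x \<in> B"
  then obtain j where "x = case_sum Inr Inl (Inr j)"
    using assms unfolding adj_def map_part_def by blast
  then show "x \<in> range Inl" by simp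
qed

lemma comp_rel_adj_upper:
  assumes "\<forall>B\<in>q. B \<subseteq> range Inl"
  shows "comp_rel (adj q) q \<subseteq> (- range Mid) \<times> (- range Mid)"
proof (rule comp_rel_subset_square)
  show "case_sum Up Mid x \<in> - range Mid" if "B \<in> q" "x \<in> B" for B x
  proof -
    from that assms obtain i where "x = Inl i" by blast
    then show ?thesis by auto
  qed
  show "case_sum Mid Lo x \<in> - range Mid" if "B \<in> adj q" "x \<in> B" for B x
  proof -
    from that adj_upper_blocks[OF assms] obtain j where "x = Inr j" by blast
    then show ?thesis by auto
  qed
qed

lemma comp_rel_adj_lower:
  assumes "\<forall>B\<in>r. B \<subseteq> range Inr"
  shows "comp_rel (adj r) r \<subseteq> range Mid \<times> range Mid"
proof (rule comp_rel_subset_square)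
  show "case_sum Up Mid x \<in> range Mid" if "B \<in> r" "x \<in> B" for B x
  proof -
    from that assms obtain j where "x = Inr j" by blast
    then show ?thesis by auto
  qed
  show "case_sum Mid Lo x \<in> range Mid" if "B \<in> adj r" "x \<in> B" for B x
  proof -
    from that adj_lower_blocks[OF assms] obtain i where "x = Inl i" by blast
    then show ?thesis by auto
  qed
qed

lemma comp_adj_drop_lower_blocks:
  assumes "\<forall>B\<in>q. B \<subseteq> range Inl" and "\<forall>B\<in>r. B \<subseteq> range Inr"
  shows "Defs.comp n n (adj (q \<union> r)) (q \<union> r) = Defs.comp n n (adj q) q"
proof -
  let ?S = "comp_rel (adj q) q" and ?M = "comp_rel (adj r) r"
  have "(case_sum Up Lo x, case_sum Up Lo y) \<in> (?S \<union> ?M)\<^sup>* \<longleftrightarrow>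
        (case_sum Up Lo x, case_sum Up Lo y) \<in> ?S\<^sup>*" for x y
  proof
    assume path: "(case_sum Up Lo x, case_sum Up Lo y) \<in> (?S \<union> ?M)\<^sup>*"
    have "case_sum Up Lo x \<notin> range Mid" by (cases x) auto
    from rtrancl_Un_stays_outside[OF path this comp_rel_adj_upper[OF assms(1)]
        comp_rel_adj_lower[OF assms(2)]]
    show "(case_sum Up Lo x, case_sum Up Lo y) \<in> ?S\<^sup>*" .
  qed (blast intro: in_rtrancl_UnI)
  then show ?thesis unfolding comp_def adj_Un comp_rel_Un by (simp only:)
qed

lemma is_partition_of_Diff_disjoint_Union:
  assumes "is_partition_of S p" and "q \<subseteq> p" and "B \<in> p - q"
  shows "B \<inter> \<Union>q = {}"
proof -
  have "B \<inter> B' = {}" if "B' \<in> q" for B'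
    using assms that unfolding is_partition_of_def by (metis DiffE subsetD)
  then show ?thesis by blast
qed

lemma shift_sub_eq_map_part:
  assumes "\<Union>q = Inl ` {a..a+b}" and "\<forall>i\<le>b. F (Inl (a + i)) = Inl i"
  shows "shift_sub a q = map_part F q"
  unfolding shift_sub_def map_part_def
proof (rule image_cong[OF refl], rule image_cong[OF refl])
  fix B x assume "B \<in> q" "x \<in> B"
  then have "x \<in> Inl ` {a..a+b}" using assms(1) by blast
  then obtain j where "a \<le> j" "j \<le> a + b" "x = Inl j" by auto
  then show "map_sum (\<lambda>i. i - a) id x = F x" using assms(2)[rule_format, of "j - a"] by simp
qed

lemma rotated_full_subpartition_split:
  assumes p: "is_partition_of (points k 0) p" and sub: "full_subpartition k p q a b"
    and F_in: "\<forall>i\<le>b. F (Inl (a + i)) = Inl i"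
    and F_out: "\<forall>i<k. i < a \<or> a + b < i \<longrightarrow> F (Inl i) \<in> range Inr"
  shows "map_part F p = shift_sub a q \<union> map_part F (p - q)"
    and "\<forall>B\<in>shift_sub a q. B \<subseteq> range Inl"
    and "\<forall>B\<in>map_part F (p - q). B \<subseteq> range Inr"
proof -
  have qp: "q \<subseteq> p" and Uq: "\<Union>q = Inl ` {a..a+b}"
    using sub unfolding full_subpartition_def by auto
  have "map_part F p = map_part F (q \<union> (p - q))"
    using qp by (simp add: Un_absorb1)
  also have "\<dots> = shift_sub a q \<union> map_part F (p - q)"
    by (simp only: map_part_Un shift_sub_eq_map_part[OF Uq F_in])
  finally show "map_part F p = shift_sub a q \<union> map_part F (p - q)" .
  show "\<forall>B\<in>shift_sub a q. B \<subseteq> range Inl"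
  proof (intro ballI subsetI)
    fix B y assume "B \<in> shift_sub a q" "y \<in> B"
    then obtain x where "x \<in> \<Union>q" "y = map_sum (\<lambda>i. i - a) id x"
      unfolding shift_sub_def map_part_def by blast
    moreover obtain j where "x = Inl j" using \<open>x \<in> \<Union>q\<close> Uq by blast
    ultimately show "y \<in> range Inl" by simp
  qed
  show "\<forall>B\<in>map_part F (p - q). B \<subseteq> range Inr"
  proof (intro ballI subsetI)
    fix B y assume "B \<in> map_part F (p - q)" "y \<in> B"
    then obtain B0 x where B0: "B0 \<in> p - q" "x \<in> B0" "y = F x"
      unfolding map_part_def by blast
    have "\<Union>p = Inl ` {..<k}" using p unfolding is_partition_of_def points_def by simp
    then obtain i where i: "i < k" "x = Inl i" using B0 by blast
    have "x \<notin> \<Union>q"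
      using is_partition_of_Diff_disjoint_Union[OF p qp B0(1)] B0(2) by blast
    then have "i < a \<or> a + b < i" using Uq i by auto
    then show "y \<in> range Inr" using F_out i B0(3) by blast
  qed
qed

theorem proposition3p2:
  fixes iv :: "'a \<Rightarrow> 'a" and C :: "'a list \<Rightarrow> 'a list \<Rightarrow> part set"
    and w :: "'a list" and p q :: part and a b :: nat
  assumes "\<And>x. iv (iv x) = x"
    and "is_category iv C"
    and "p \<in> C w []" and "on_one_line p"
    and "full_subpartition (length w) p q a b"
  shows "comp (length (subword w a b)) (length (subword w a b))
           (adj (shift_sub a q)) (shift_sub a q)
         \<in> C (subword w a b) (subword w a b)"
proof -
  let ?u = "subword w a b"
  define t s where "t = take a w" and "s = drop (Suc b) (drop a w)"
  have w_eq: "t @ ?u @ s = w" unfolding t_def s_def subword_def by (simp only: append_take_drop_id)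
  have ab: "a + b < length w" using assms(5) unfolding full_subpartition_def by simp
  have lens: "length t = a" "length ?u = Suc b" using ab by (auto simp: t_def subword_def)
  from assms(3) have p_split: "p \<in> C (t @ ?u @ s) []" by (simp only: w_eq)
  obtain F v where F: "map_part F p \<in> C ?u v"
    and F_in: "\<And>i. i < length ?u \<Longrightarrow> F (Inl (length t + i)) = Inl i"
    and F_out: "\<And>i. i < length (t @ ?u @ s) \<Longrightarrow> i < length t \<or> length t + length ?u \<le> i \<Longrightarrow>
      F (Inl i) \<in> range Inr"
    using rotate_outside_down[OF assms(2) p_split] by blast
  have partition: "is_partition_of (points (length w) 0) p"
    using category_NC[OF assms(2), of w "[]"] assms(3) unfolding NC_def Part_def by auto
  have F_window: "\<forall>i\<le>b. F (Inl (a + i)) = Inl i"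
    using F_in lens by simp
  have F_outside: "\<forall>i<length w. i < a \<or> a + b < i \<longrightarrow> F (Inl i) \<in> range Inr"
    using F_out unfolding w_eq lens by auto
  note split = rotated_full_subpartition_split[OF partition assms(5) F_window F_outside]
  have "comp (length ?u) (length ?u) (adj (map_part F p)) (map_part F p) \<in> C ?u ?u"
    using category_comp[OF assms(2) F category_adj[OF assms(2) F]] .
  also have "comp (length ?u) (length ?u) (adj (map_part F p)) (map_part F p) =
      comp (length ?u) (length ?u) (adj (shift_sub a q)) (shift_sub a q)"
    unfolding split(1) by (rule comp_adj_drop_lower_blocks[OF split(2,3)])
  finally show ?thesis .
qed

end
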